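(* Let $n\geq 3$, $x_n=2\cos(\pi/n)$, and let $c$ be a real number with $c\leq 1$ and $c\leq x_n^2-2$. Then there is a real $y_c$ with $y_c\geq 2$ and $y_c\geq x_n^2-1$ such that $\lambda(x_n,y_c)=c$ and $\alpha(x_n,y_c)<0$.
   Context: $\lambda(x,y)=9x^2-12x^4+4x^6-5y+10x^2y+2x^4y-4x^6y-11x^2y^2+8x^4y^2+x^6y^2+5y^3-4x^2y^3-3x^4y^3+3x^2y^4-y^5$ and $\alpha(x,y)=1-4x^2+2x^4+2y-x^2y-x^4y-y^2+2x^2y^2-y^3$. *)

theory Defs
  imports Complex_Main
begin

definition lam :: "real \<Rightarrow> real \<Rightarrow> real" where
  "lam x y = 9*x^2 - 12*x^4 + 4*x^6 - 5*y + 10*x^2*y + 2*x^4*y - 4*x^6*y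
     - 11*x^2*y^2 + 8*x^4*y^2 + x^6*y^2 + 5*y^3 - 4*x^2*y^3 - 3*x^4*y^3
     + 3*x^2*y^4 - y^5"

definition alpha :: "real \<Rightarrow> real \<Rightarrow> real" where
  "alpha x y = 1 - 4*x^2 + 2*x^4 + 2*y - x^2*y - x^4*y - y^2 + 2*x^2*y^2 - y^3"

end

theory Submission
  imports Defs "HOL-Real_Asymp.Real_Asymp"
begin

text \<open>Both polynomials are even in x, so we work with t = x^2. Along y = max 2 (t - 1) the
  value of lam is t - 2 or 1, hence at least c, while lam tends to -\<infinity> as y \<rightarrow> \<infinity> (leading
  term -y^5); the intermediate value theorem yields y_c. Negativity of alpha there follows
  by expanding it around y = 2 (for t \<le> 3) or y = t - 1 (for t \<ge> 3), where every
  coefficient has the right sign.\<close>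

definition lam_sq :: "real \<Rightarrow> real \<Rightarrow> real" where
  "lam_sq t y = 9*t - 12*t^2 + 4*t^3 - 5*y + 10*t*y + 2*t^2*y - 4*t^3*y
     - 11*t*y^2 + 8*t^2*y^2 + t^3*y^2 + 5*y^3 - 4*t*y^3 - 3*t^2*y^3
     + 3*t*y^4 - y^5"

definition alpha_sq :: "real \<Rightarrow> real \<Rightarrow> real" where
  "alpha_sq t y = 1 - 4*t + 2*t^2 + 2*y - t*y - t^2*y - y^2 + 2*t*y^2 - y^3"

lemma lam_eq_lam_sq: "lam x y = lam_sq (x^2) y"
  unfolding lam_def lam_sq_def by algebra

lemma alpha_eq_alpha_sq: "alpha x y = alpha_sq (x^2) y"
  unfolding alpha_def alpha_sq_def by algebra

lemma lam_sq_at_2: "lam_sq t 2 = t - 2"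
  unfolding lam_sq_def by algebra

lemma lam_sq_at_pred: "lam_sq t (t - 1) = 1"
  unfolding lam_sq_def by algebra

lemma alpha_sq_neg_if_le_3:
  fixes t y :: real
  assumes "t \<le> 3" "y \<ge> 2"
  shows "alpha_sq t y < 0"
proof -
  define s where "s = y - 2"
  have "s \<ge> 0" using assms s_def by simp
  have expand: "alpha_sq t y = (2*t - 7)*s^2 - s^3 - ((t - 7/2)^2 + 7/4)*s + (2*t - 7)"
    unfolding alpha_sq_def s_def by algebra
  have "(2*t - 7)*s^2 \<le> 0" using assms by (intro mult_nonpos_nonneg) auto
  moreover have "((t - 7/2)^2 + 7/4)*s \<ge> 0" using \<open>s \<ge> 0\<close> by simp
  moreover have "s^3 \<ge> 0" using \<open>s \<ge> 0\<close> by simp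
  ultimately show ?thesis using expand assms by linarith
qed

lemma alpha_sq_neg_if_ge_3:
  fixes t y :: real
  assumes "t \<ge> 3" "y \<ge> t - 1"
  shows "alpha_sq t y < 0"
proof -
  define s where "s = y - (t - 1)"
  have "s \<ge> 0" using assms s_def by simp
  have expand: "alpha_sq t y = (2 - t)*s^2 - s^3 + (1 - t)*s - 1"
    unfolding alpha_sq_def s_def by algebra
  have "(2 - t)*s^2 \<le> 0" using assms by (intro mult_nonpos_nonneg) auto
  moreover have "(1 - t)*s \<le> 0" using assms \<open>s \<ge> 0\<close> by (intro mult_nonpos_nonneg) auto
  moreover have "s^3 \<ge> 0" using \<open>s \<ge> 0\<close> by simp
  ultimately show ?thesis using expand by linarith
qed

lemma alpha_sq_neg:
  fixes t y :: real
  assumes "y \<ge> 2" "y \<ge> t - 1"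
  shows "alpha_sq t y < 0"
  using assms alpha_sq_neg_if_le_3 alpha_sq_neg_if_ge_3 by (cases "t \<le> 3") auto

lemma lam_sq_tendsto_at_bot: "filterlim (lam_sq t) at_bot at_top"
  unfolding lam_sq_def by real_asymp

lemma continuous_on_lam_sq: "continuous_on S (lam_sq t)"
  unfolding lam_sq_def by (intro continuous_intros)

lemma IVT_filterlim_at_bot:
  fixes f :: "real \<Rightarrow> real"
  assumes "continuous_on {a..} f" "filterlim f at_bot at_top" "c \<le> f a"
  shows "\<exists>y \<ge> a. f y = c"
proof -
  have "\<forall>\<^sub>F y in at_top. a \<le> y \<and> f y \<le> c"
    using eventually_ge_at_top[of a] assms(2) by (intro eventually_conj) (auto simp: filterlim_at_bot)
  then obtain b where "b \<ge> a" "f b \<le> c"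
    by (auto simp: eventually_at_top_linorder)
  then obtain y where "a \<le> y" "y \<le> b" "f y = c"
    using IVT2'[of f b c a] assms(1,3) continuous_on_subset[OF assms(1)] by auto
  then show ?thesis by auto
qed

lemma lam_sq_level_with_alpha_sq_neg:
  fixes t c :: real
  assumes "c \<le> 1" "c \<le> t - 2"
  shows "\<exists>y. y \<ge> 2 \<and> y \<ge> t - 1 \<and> lam_sq t y = c \<and> alpha_sq t y < 0"
proof -
  define a where "a = max 2 (t - 1)"
  have "c \<le> lam_sq t a"
    using assms lam_sq_at_2[of t] lam_sq_at_pred[of t] by (auto simp: a_def max_def)
  then obtain y where "y \<ge> a" "lam_sq t y = c"
    using IVT_filterlim_at_bot[OF continuous_on_lam_sq lam_sq_tendsto_at_bot] by blast
  then show ?thesis using alpha_sq_neg[of y t] by (auto simp: a_def)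
qed

theorem proposition6p9:
  fixes n :: nat and c :: real
  assumes "n \<ge> 3"
    and "c \<le> 1"
    and "c \<le> (2 * cos (pi / real n))^2 - 2"
  shows "\<exists>y::real. y \<ge> 2 \<and> y \<ge> (2 * cos (pi / real n))^2 - 1
           \<and> lam (2 * cos (pi / real n)) y = c \<and> alpha (2 * cos (pi / real n)) y < 0"
  using lam_sq_level_with_alpha_sq_neg[OF assms(2,3)]
  unfolding lam_eq_lam_sq alpha_eq_alpha_sq by blast

end
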